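(* Let $1<p<\infty$, $s\in(0,1)$ with $sp<N$, let $\Omega\subset\mathbb{R}^N$ be an open bounded connected set, $a\in L^{N/(sp)}(\Omega)$, $\mu\in\mathbb{R}$, $p\le q\le p^*_s$. Let $u\in D^{s,p}_0(\Omega)\setminus\{0\}$ be nonnegative and satisfy, for every nonnegative $\varphi\in D^{s,p}_0(\Omega)$, $$\int_{\mathbb{R}^{2N}}\frac{J_p(u(x)-u(y))(\varphi(x)-\varphi(y))}{|x-y|^{N+sp}}dxdy+\int_\Omega a\,u^{p-1}\varphi\,dx\ge\mu\int_\Omega u^{q-1}\varphi\,dx.$$ Then $u>0$ almost everywhere in $\Omega$.
   Context: $p^*_s=Np/(N-sp)$; $J_p(t)=|t|^{p-2}t$; $[u]_{D^{s,p}(\mathbb{R}^N)}=\big(\int_{\mathbb{R}^{2N}}\frac{|u(x)-u(y)|^p}{|x-y|^{N+sp}}dxdy\big)^{1/p}$; $D^{s,p}_0(\mathbb{R}^N)=\{u\in L^{p^*_s}:[u]<\infty\}$; $D^{s,p}_0(\Omega)=\{u\in D^{s,p}_0(\mathbb{R}^N):u=0\text{ a.e. outside }\Omega\}$. *)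

theory Defs
  imports "HOL-Analysis.Analysis"
begin

definition frac_crit_exp :: "nat \<Rightarrow> real \<Rightarrow> real \<Rightarrow> real" where
  "frac_crit_exp N s p = real N * p / (real N - s * p)"

definition Jp :: "real \<Rightarrow> real \<Rightarrow> real" where
  "Jp p t = \<bar>t\<bar> powr (p - 2) * t"

definition gagliardo_pow :: "real \<Rightarrow> real \<Rightarrow> ('a::euclidean_space \<Rightarrow> real) \<Rightarrow> ennreal" where
  "gagliardo_pow s p u =
     (\<integral>\<^sup>+ z. ennreal (\<bar>u (fst z) - u (snd z)\<bar> powr p /
              norm (fst z - snd z) powr (real DIM('a) + s * p)) \<partial>(lborel \<Otimes>\<^sub>M lborel))"

definition Dsp0_RN :: "real \<Rightarrow> real \<Rightarrow> ('a::euclidean_space \<Rightarrow> real) set" where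
  "Dsp0_RN s p = {u. u \<in> borel_measurable lborel
      \<and> integrable lborel (\<lambda>x. \<bar>u x\<bar> powr (frac_crit_exp DIM('a) s p))
      \<and> gagliardo_pow s p u < \<infinity>}"

definition Dsp0 :: "real \<Rightarrow> real \<Rightarrow> 'a set \<Rightarrow> ('a::euclidean_space \<Rightarrow> real) set" where
  "Dsp0 s p \<Omega> = {u \<in> Dsp0_RN s p. AE x in lborel. x \<notin> \<Omega> \<longrightarrow> u x = 0}"

end

theory Submission
  imports Defs
begin

text \<open>
  Test the supersolution inequality with \<open>\<phi>\<^sub>n = (\<eta> - n u)\<^sup>+\<close>, where \<open>\<eta>\<close> is the distance
  to the complement of \<open>\<Omega>\<close>, a bounded Lipschitz function vanishing outside \<open>\<Omega>\<close>.
  Since \<open>0 \<le> \<phi>\<^sub>n \<le> \<eta>\<close> and \<open>\<phi>\<^sub>n\<close> eventually vanishes where \<open>u > 0\<close>, both potential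
  terms tend to \<open>0\<close>. In the nonlocal term, \<open>\<phi>\<^sub>n(x) - \<phi>\<^sub>n(y)\<close> splits into a part whose
  product with \<open>J\<^sub>p(u(x) - u(y))\<close> is nonpositive (Fatou's lemma applies) and a part
  bounded by \<open>|\<eta>(x) - \<eta>(y)|\<close> (dominated convergence applies). In the limit,
  \<open>\<langle>(-\<Delta>\<^sub>p)\<^sup>s u, \<psi>\<rangle> \<ge> 0\<close> for \<open>\<psi> = \<eta> \<cdot> 1\<^bsub>{u = 0}\<^esub>\<close>. But the integrand of this
  pairing is nonpositive, and negative on \<open>({u = 0} \<inter> \<Omega>) \<times> {u > 0}\<close>, a set of positive
  measure unless \<open>u > 0\<close> a.e. in \<open>\<Omega>\<close>.
\<close>

section \<open>Integrability of truncated Riesz kernels\<close>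

lemma ex_dyadic_annulus_le_1:
  fixes r :: real
  assumes "0 < r" "r \<le> 1"
  shows "\<exists>k. (1/2)^k / 2 < r \<and> r \<le> (1/2::real)^k"
proof -
  define k where "k = nat \<lfloor>log 2 (1/r)\<rfloor>"
  have k: "\<lfloor>log 2 (1/r)\<rfloor> = int k" using assms by (simp add: k_def)
  have "2 powr k \<le> 1/r \<and> 1/r < 2 powr (k + 1)"
    using floor_log_eq_powr_iff[of "1/r" 2 "int k"] assms k by (simp add: add.commute)
  then show ?thesis
    using assms by (intro exI[of _ k]) (auto simp: powr_realpow powr_add power_one_over field_simps)
qed

lemma ex_dyadic_annulus_gt_1:
  fixes r :: real
  assumes "1 < r"
  shows "\<exists>k. 2^k / 2 < r \<and> r \<le> (2::real)^k"
proof -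
  define m where "m = nat (\<lceil>log 2 r\<rceil> - 1)"
  have "0 < \<lceil>log 2 r\<rceil>" using assms by simp
  then have "\<lceil>log 2 r\<rceil> = int m + 1" by (simp add: m_def)
  then have "2 powr m < r \<and> r \<le> 2 powr (m + 1)"
    using ceiling_log_eq_powr_iff[of r 2 m] assms by simp
  then show ?thesis
    by (intro exI[of _ "Suc m"]) (auto simp: powr_realpow powr_add)
qed

lemma nn_integral_annulus_norm_powr_le:
  fixes r \<gamma> :: real
  assumes "0 < r" "0 \<le> \<gamma>"
  shows "(\<integral>\<^sup>+h. indicator {h::'a::euclidean_space. r/2 < norm h \<and> norm h \<le> r} h
            * ennreal (norm h powr -\<gamma>) \<partial>lborel)
         \<le> ennreal (unit_ball_vol (real DIM('a)) * 2 powr \<gamma> * r powr (real DIM('a) - \<gamma>))"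
proof -
  let ?A = "{h::'a. r/2 < norm h \<and> norm h \<le> r}"
  have "(\<integral>\<^sup>+h. indicator ?A h * ennreal (norm h powr -\<gamma>) \<partial>lborel)
      \<le> (\<integral>\<^sup>+h. ennreal ((r/2) powr -\<gamma>) * indicator ?A h \<partial>lborel)"
    using assms by (intro nn_integral_mono) (auto simp: indicator_def intro!: ennreal_leI powr_mono2')
  also have "\<dots> = ennreal ((r/2) powr -\<gamma>) * emeasure lborel ?A"
    by (rule nn_integral_cmult_indicator) measurable
  also have "\<dots> \<le> ennreal ((r/2) powr -\<gamma>) * emeasure lborel (cball (0::'a) r)"
    by (intro mult_left_mono emeasure_mono) auto
  also have "\<dots> = ennreal ((r/2) powr -\<gamma> * (unit_ball_vol (real DIM('a)) * r ^ DIM('a)))"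
    using assms by (simp add: emeasure_cball ennreal_mult)
  also have "(r/2) powr -\<gamma> * (unit_ball_vol (real DIM('a)) * r ^ DIM('a))
      = unit_ball_vol (real DIM('a)) * 2 powr \<gamma> * r powr (real DIM('a) - \<gamma>)"
    using assms by (simp add: powr_divide powr_minus powr_diff powr_realpow[symmetric] field_simps)
  finally show ?thesis .
qed

lemma nn_integral_norm_powr_dyadic_finite:
  fixes \<gamma> \<theta> :: real and S :: "'a::euclidean_space set"
  assumes \<gamma>: "0 \<le> \<gamma>" and \<theta>: "0 < \<theta>" "\<theta> powr (real DIM('a) - \<gamma>) < 1"
    and cover: "\<And>h. h \<in> S \<Longrightarrow> h \<noteq> 0 \<Longrightarrow> \<exists>k. \<theta>^k / 2 < norm h \<and> norm h \<le> \<theta>^k"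
  shows "(\<integral>\<^sup>+h. indicator S h * ennreal (norm h powr -\<gamma>) \<partial>lborel) < \<infinity>"
proof -
  define A where "A k = {h::'a. \<theta>^k / 2 < norm h \<and> norm h \<le> \<theta>^k}" for k
  define V where "V = unit_ball_vol (real DIM('a))"
  define c where "c = \<theta> powr (real DIM('a) - \<gamma>)"
  have le_suminf: "f k \<le> suminf f" for f :: "nat \<Rightarrow> ennreal" and k
    using sum_le_suminf[of f "{k}"] by simp
  have "(\<integral>\<^sup>+h. indicator S h * ennreal (norm h powr -\<gamma>) \<partial>lborel)
      \<le> (\<integral>\<^sup>+h. (\<Sum>k. indicator (A k) h * ennreal (norm h powr -\<gamma>)) \<partial>lborel)"
  proof (rule nn_integral_mono)
    fix h :: 'a
    show "indicator S h * ennreal (norm h powr -\<gamma>) \<le> (\<Sum>k. indicator (A k) h * ennreal (norm h powr -\<gamma>))"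
    proof (cases "h \<in> S \<and> h \<noteq> 0")
      case True
      then obtain k where "h \<in> A k" using cover by (auto simp: A_def)
      then have "indicator S h * ennreal (norm h powr -\<gamma>) = indicator (A k) h * ennreal (norm h powr -\<gamma>)"
        using True by simp
      also have "\<dots> \<le> (\<Sum>k. indicator (A k) h * ennreal (norm h powr -\<gamma>))"
        by (rule le_suminf)
      finally show ?thesis .
    qed (auto simp: indicator_def)
  qed
  also have "\<dots> = (\<Sum>k. \<integral>\<^sup>+h. indicator (A k) h * ennreal (norm h powr -\<gamma>) \<partial>lborel)"
    by (rule nn_integral_suminf) (unfold A_def, measurable)
  also have "\<dots> \<le> (\<Sum>k. ennreal (V * 2 powr \<gamma> * c^k))"
  proof (intro suminf_le)
    fix k
    have "(\<theta>^k) powr (real DIM('a) - \<gamma>) = c^k"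
      using \<theta> by (simp add: c_def powr_power powr_realpow[symmetric] powr_powr mult.commute)
    then show "(\<integral>\<^sup>+h. indicator (A k) h * ennreal (norm h powr -\<gamma>) \<partial>lborel) \<le> ennreal (V * 2 powr \<gamma> * c^k)"
      using nn_integral_annulus_norm_powr_le[where 'a='a and r="\<theta>^k" and \<gamma>=\<gamma>] \<theta> \<gamma> by (simp add: A_def V_def)
  qed auto
  also have "\<dots> = ennreal (\<Sum>k. V * 2 powr \<gamma> * c^k)"
    using \<theta> by (intro suminf_ennreal2) (auto simp: V_def c_def intro!: summable_mult summable_geometric)
  also have "\<dots> < \<infinity>" by simp
  finally show ?thesis .
qed

lemma nn_integral_cball_norm_powr_finite:
  fixes \<gamma> :: real
  assumes "0 \<le> \<gamma>" "\<gamma> < real DIM('a)"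
  shows "(\<integral>\<^sup>+h. indicator (cball (0::'a::euclidean_space) 1) h * ennreal (norm h powr -\<gamma>) \<partial>lborel) < \<infinity>"
proof (rule nn_integral_norm_powr_dyadic_finite[where \<theta>="1/2"])
  show "(1/2::real) powr (real DIM('a) - \<gamma>) < 1"
    using powr_less_mono2[of "real DIM('a) - \<gamma>" "1/2" 1] assms by simp
qed (use assms ex_dyadic_annulus_le_1 in auto)

lemma nn_integral_outside_ball_norm_powr_finite:
  fixes \<gamma> :: real
  assumes "real DIM('a) < \<gamma>"
  shows "(\<integral>\<^sup>+h. indicator {h::'a::euclidean_space. 1 < norm h} h * ennreal (norm h powr -\<gamma>) \<partial>lborel) < \<infinity>"
proof (rule nn_integral_norm_powr_dyadic_finite[where \<theta>=2])
  show "(2::real) powr (real DIM('a) - \<gamma>) < 1"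
    using powr_less_mono[of "real DIM('a) - \<gamma>" 0 2] assms by simp
qed (use assms ex_dyadic_annulus_gt_1 in auto)

lemma nn_integral_truncated_kernel_finite:
  fixes s p L :: real
  assumes s: "0 < s" "s < 1" and p: "0 < p" and L: "0 < L"
  shows "(\<integral>\<^sup>+h. ennreal (min (norm h) L powr p / norm (h::'a::euclidean_space) powr (real DIM('a) + s * p))
           \<partial>lborel) < \<infinity>"
proof -
  define N where "N = real DIM('a)"
  define \<gamma> where "\<gamma> = max 0 (N + s * p - p)"
  have \<gamma>: "0 \<le> \<gamma>" "\<gamma> < N" using s p by (auto simp: \<gamma>_def N_def)
  have "N < N + s * p" using s p by simp
  have bound: "ennreal (min (norm h) L powr p / norm h powr (N + s * p))
      \<le> indicator (cball 0 1) h * ennreal (norm h powr -\<gamma>)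
       + ennreal (L powr p) * (indicator {h. 1 < norm h} h * ennreal (norm h powr -(N + s * p)))"
    for h :: 'a
  proof (cases "h = 0")
    case False
    then have nh: "0 < norm h" by simp
    have quot: "min (norm h) L powr p / norm h powr (N + s * p)
        = min (norm h) L powr p * norm h powr -(N + s * p)"
      by (simp add: powr_minus divide_inverse del: minus_add_distrib)
    show ?thesis
    proof (cases "norm h \<le> 1")
      case True
      have "min (norm h) L powr p * norm h powr -(N + s * p) \<le> norm h powr p * norm h powr -(N + s * p)"
        using nh p L by (intro mult_right_mono powr_mono2) auto
      also have "\<dots> = norm h powr (p - N - s * p)" by (simp add: powr_add[symmetric] algebra_simps)
      also have "\<dots> \<le> norm h powr -\<gamma>"
        using True nh by (intro powr_mono') (auto simp: \<gamma>_def)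
      finally show ?thesis
        using True unfolding quot by (auto simp: indicator_def intro: add_increasing2 ennreal_leI)
    next
      case False
      have "min (norm h) L powr p * norm h powr -(N + s * p) \<le> L powr p * norm h powr -(N + s * p)"
        using nh p L by (intro mult_right_mono powr_mono2) auto
      then show ?thesis
        using False unfolding quot
        by (auto simp: indicator_def ennreal_mult[symmetric] intro: add_increasing ennreal_leI)
    qed
  qed simp
  have "(\<integral>\<^sup>+h. ennreal (min (norm h) L powr p / norm (h::'a) powr (N + s * p)) \<partial>lborel)
     \<le> (\<integral>\<^sup>+h. indicator (cball 0 1) h * ennreal (norm (h::'a) powr -\<gamma>)
       + ennreal (L powr p) * (indicator {h. 1 < norm h} h * ennreal (norm h powr -(N + s * p))) \<partial>lborel)"
    by (rule nn_integral_mono) (rule bound)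
  also have "\<dots> = (\<integral>\<^sup>+h. indicator (cball 0 1) h * ennreal (norm (h::'a) powr -\<gamma>) \<partial>lborel)
      + ennreal (L powr p)
        * (\<integral>\<^sup>+h. indicator {h::'a. 1 < norm h} h * ennreal (norm h powr -(N + s * p)) \<partial>lborel)"
    by (subst nn_integral_add; (measurable)?; simp add: nn_integral_cmult)
  also have "\<dots> < \<infinity>"
    using nn_integral_cball_norm_powr_finite[OF \<gamma>[unfolded N_def]]
      nn_integral_outside_ball_norm_powr_finite[where 'a='a and \<gamma>="N + s * p"] \<open>N < N + s * p\<close>
    by (auto simp: N_def ennreal_mult_less_top)
  finally show ?thesis unfolding N_def .
qed

lemma nn_integral_norm_diff_lborel:
  fixes f :: "real \<Rightarrow> ennreal" and x :: "'a::euclidean_space"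
  assumes "f \<in> borel_measurable borel"
  shows "(\<integral>\<^sup>+y. f (norm (x - y)) \<partial>lborel) = (\<integral>\<^sup>+h. f (norm (h::'a)) \<partial>lborel)"
proof -
  have "(\<integral>\<^sup>+h. f (norm (h::'a)) \<partial>lborel) = (\<integral>\<^sup>+h. f (norm h) \<partial>distr lborel borel ((+) (-x)))"
    by (simp add: lborel_distr_plus)
  also have "\<dots> = (\<integral>\<^sup>+y. f (norm (-x + y)) \<partial>lborel)"
    using assms by (intro nn_integral_distr) auto
  also have "\<dots> = (\<integral>\<^sup>+y. f (norm (x - y)) \<partial>lborel)"
    by (simp add: norm_minus_commute)
  finally show ?thesis ..
qed

lemma gagliardo_pow_lipschitz_finite:
  fixes \<eta> :: "'a::euclidean_space \<Rightarrow> real" and s p C :: real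
  assumes s: "0 < s" "s < 1" and p: "0 < p" and C: "0 < C"
    and \<Omega>: "\<Omega> \<in> sets lborel" "bounded \<Omega>"
    and lip: "\<And>x y. \<bar>\<eta> x - \<eta> y\<bar> \<le> dist x y" and bnd: "\<And>x. \<bar>\<eta> x\<bar> \<le> C"
    and supp: "\<And>x. x \<notin> \<Omega> \<Longrightarrow> \<eta> x = 0"
  shows "gagliardo_pow s p \<eta> < \<infinity>"
proof -
  define k where "k t = ennreal (min t (2 * C) powr p / t powr (real DIM('a) + s * p))" for t
  have k_meas[measurable]: "k \<in> borel_measurable borel" unfolding k_def by measurable
  define G where "G = (\<integral>\<^sup>+h. k (norm (h::'a)) \<partial>lborel)"
  have G: "G < \<infinity>"
    unfolding G_def k_def using nn_integral_truncated_kernel_finite[OF s p, of "2 * C"] C by simp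
  have G_x: "(\<integral>\<^sup>+y. k (norm (x - y)) \<partial>lborel) = G" for x :: 'a
    unfolding G_def by (rule nn_integral_norm_diff_lborel) simp
  have G_y: "(\<integral>\<^sup>+x. k (norm (x - y)) \<partial>lborel) = G" for y :: 'a
    using G_x[of y] by (simp add: norm_minus_commute)
  have "ennreal (\<bar>\<eta> x - \<eta> y\<bar> powr p / norm (x - y) powr (real DIM('a) + s * p))
      \<le> indicator \<Omega> x * k (norm (x - y)) + indicator \<Omega> y * k (norm (x - y))" for x y
  proof (cases "x \<in> \<Omega> \<or> y \<in> \<Omega>")
    case True
    have "\<bar>\<eta> x - \<eta> y\<bar> \<le> min (norm (x - y)) (2 * C)"
      using lip[of x y] bnd[of x] bnd[of y] by (auto simp: dist_norm)
    then have "ennreal (\<bar>\<eta> x - \<eta> y\<bar> powr p / norm (x - y) powr (real DIM('a) + s * p)) \<le> k (norm (x - y))"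
      unfolding k_def using p by (intro ennreal_leI divide_right_mono powr_mono2) auto
    then show ?thesis using True by (auto simp: indicator_def intro: add_increasing add_increasing2)
  qed (use supp in simp)
  then have "gagliardo_pow s p \<eta>
      \<le> (\<integral>\<^sup>+z. indicator \<Omega> (fst z) * k (norm (fst z - snd z))
             + indicator \<Omega> (snd z) * k (norm (fst z - snd z)) \<partial>(lborel \<Otimes>\<^sub>M lborel))"
    unfolding gagliardo_pow_def by (intro nn_integral_mono) auto
  also have "\<dots> = (\<integral>\<^sup>+z. indicator \<Omega> (fst z) * k (norm (fst z - snd z)) \<partial>(lborel \<Otimes>\<^sub>M lborel))
      + (\<integral>\<^sup>+z. indicator \<Omega> (snd z) * k (norm (fst z - snd z)) \<partial>(lborel \<Otimes>\<^sub>M lborel))"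
    using \<Omega>(1) by (intro nn_integral_add) auto
  also have "(\<integral>\<^sup>+z. indicator \<Omega> (fst z) * k (norm (fst z - snd z)) \<partial>(lborel \<Otimes>\<^sub>M lborel))
      = (\<integral>\<^sup>+x. \<integral>\<^sup>+y. indicator \<Omega> x * k (norm (x - y)) \<partial>lborel \<partial>lborel)"
    using \<Omega>(1) by (subst lborel.nn_integral_fst[symmetric]) auto
  also have "\<dots> = G * emeasure lborel \<Omega>"
    using \<Omega>(1) by (simp add: nn_integral_cmult G_x nn_integral_cmult_indicator mult.commute)
  also have "(\<integral>\<^sup>+z. indicator \<Omega> (snd z) * k (norm (fst z - snd z)) \<partial>(lborel \<Otimes>\<^sub>M lborel))
      = (\<integral>\<^sup>+y. \<integral>\<^sup>+x. indicator \<Omega> y * k (norm (x - y)) \<partial>lborel \<partial>lborel)"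
    using \<Omega>(1) by (subst lborel_pair.nn_integral_snd[symmetric]) auto
  also have "\<dots> = G * emeasure lborel \<Omega>"
    using \<Omega>(1) by (simp add: nn_integral_cmult G_y nn_integral_cmult_indicator mult.commute)
  finally have "gagliardo_pow s p \<eta> \<le> G * emeasure lborel \<Omega> + G * emeasure lborel \<Omega>" .
  also have "\<dots> < \<infinity>"
    using G emeasure_bounded_finite[OF \<Omega>(2)] by (simp add: ennreal_mult_less_top)
  finally show ?thesis .
qed

lemma mult_le_powr_add_powr:
  fixes a b \<alpha> \<beta> :: real
  assumes "0 \<le> a" "0 \<le> b" "1 < \<alpha>" "1 < \<beta>" "1/\<alpha> + 1/\<beta> = 1"
  shows "a * b \<le> a powr \<alpha> + b powr \<beta>"
proof -
  have "a * b \<le> a powr \<alpha> / \<alpha> + b powr \<beta> / \<beta>" using assms by (intro Youngs_inequality)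
  also have "\<dots> \<le> a powr \<alpha> + b powr \<beta>"
    using assms by (intro add_mono) (simp_all add: divide_le_eq mult_le_cancel_left1)
  finally show ?thesis .
qed

lemma powr_le_one_add_powr:
  fixes t e E :: real
  assumes "0 \<le> t" "0 \<le> e" "e \<le> E"
  shows "t powr e \<le> 1 + t powr E"
proof (cases "t \<le> 1")
  case True
  have "t powr e \<le> 1 powr e" using True assms by (intro powr_mono2) auto
  then show ?thesis by (simp add: add_increasing2)
next
  case False
  then have "t powr e \<le> t powr E" using assms by (intro powr_mono) auto
  then show ?thesis by simp
qed

lemma powr_add_le:
  fixes a b p :: real
  assumes "0 \<le> a" "0 \<le> b" "0 < p"
  shows "(a + b) powr p \<le> 2 powr p * (a powr p + b powr p)"
proof -
  have "(a + b) powr p \<le> (2 * max a b) powr p" using assms by (intro powr_mono2) auto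
  also have "\<dots> = 2 powr p * max a b powr p" using assms by (simp add: powr_mult)
  also have "max a b powr p \<le> a powr p + b powr p" by (auto simp: max_def)
  then have "2 powr p * max a b powr p \<le> 2 powr p * (a powr p + b powr p)" by simp
  finally show ?thesis .
qed

lemma abs_max_0_diff_le: "\<bar>max 0 a - max 0 b\<bar> \<le> \<bar>a - b\<bar>" for a b :: real
  by (auto simp: max_def)

lemma Jp_0 [simp]: "Jp p 0 = 0"
  by (simp add: Jp_def)

lemma Jp_pos_iff: "0 < Jp p t \<longleftrightarrow> 0 < t" and Jp_neg_iff: "Jp p t < 0 \<longleftrightarrow> t < 0"
  by (auto simp: Jp_def zero_less_mult_iff mult_less_0_iff)

lemma Jp_nonneg_iff: "0 \<le> Jp p t \<longleftrightarrow> 0 \<le> t" and Jp_nonpos_iff: "Jp p t \<le> 0 \<longleftrightarrow> t \<le> 0"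
  by (simp_all add: not_less[symmetric] Jp_pos_iff Jp_neg_iff)

lemma abs_Jp: "\<bar>Jp p t\<bar> = \<bar>t\<bar> powr (p - 1)"
proof (cases "t = 0")
  case False
  have "\<bar>t\<bar> powr (p - 2) * \<bar>t\<bar> powr 1 = \<bar>t\<bar> powr (p - 1)"
    unfolding powr_add[symmetric] by (simp add: algebra_simps)
  then show ?thesis using False by (simp add: Jp_def abs_mult)
qed (simp add: Jp_def)

lemma Jp_measurable [measurable]: "f \<in> borel_measurable M \<Longrightarrow> (\<lambda>x. Jp p (f x)) \<in> borel_measurable M"
  unfolding Jp_def by measurable

lemma abs_Jp_mult_le:
  fixes d w e p :: real
  assumes p: "1 < p" and w: "\<bar>w\<bar> \<le> e"
  shows "\<bar>Jp p d * w\<bar> \<le> \<bar>d\<bar> powr p + e powr p"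
proof -
  have "\<bar>Jp p d * w\<bar> \<le> \<bar>d\<bar> powr (p - 1) * e"
    using w by (simp add: abs_mult abs_Jp mult_left_mono)
  also have "\<dots> \<le> (\<bar>d\<bar> powr (p - 1)) powr (p / (p - 1)) + e powr p"
    using p w by (intro mult_le_powr_add_powr) (auto simp: field_simps)
  also have "(\<bar>d\<bar> powr (p - 1)) powr (p / (p - 1)) = \<bar>d\<bar> powr p"
    using p by (simp add: powr_powr)
  finally show ?thesis .
qed

lemma Jp_diff_mult_antimono_nonpos:
  fixes g :: "real \<Rightarrow> real"
  assumes "antimono g"
  shows "Jp p (t - t') * (g t - g t') \<le> 0"
proof (cases "t' \<le> t")
  case True
  have "0 \<le> Jp p (t - t')" using True by (simp add: Jp_nonneg_iff)
  moreover have "g t - g t' \<le> 0" using antimonoD[OF assms True] by simp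
  ultimately show ?thesis by (rule mult_nonneg_nonpos)
next
  case False
  have "Jp p (t - t') \<le> 0" using False by (simp add: Jp_nonpos_iff)
  moreover have "0 \<le> g t - g t'" using antimonoD[OF assms, of t t'] False by simp
  ultimately show ?thesis by (rule mult_nonpos_nonneg)
qed

section \<open>Gagliardo seminorm estimates and test functions\<close>

text \<open>Integrated over \<open>\<real>\<^sup>N \<times> \<real>\<^sup>N\<close>, this is the weak form \<open>\<langle>(-\<Delta>\<^sub>p)\<^sup>s u, \<phi>\<rangle>\<close>.\<close>

definition frac_plap_integrand ::
  "real \<Rightarrow> real \<Rightarrow> ('a::euclidean_space \<Rightarrow> real) \<Rightarrow> ('a \<Rightarrow> real) \<Rightarrow> 'a \<times> 'a \<Rightarrow> real" where
  "frac_plap_integrand s p u \<phi> z = Jp p (u (fst z) - u (snd z)) * (\<phi> (fst z) - \<phi> (snd z))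
     / norm (fst z - snd z) powr (real DIM('a) + s * p)"

lemma integrable_gagliardo_density:
  fixes f :: "'a::euclidean_space \<Rightarrow> real"
  assumes [measurable]: "f \<in> borel_measurable borel" and "gagliardo_pow s p f < \<infinity>"
  shows "integrable (lborel \<Otimes>\<^sub>M lborel)
    (\<lambda>z. \<bar>f (fst z) - f (snd z)\<bar> powr p / norm (fst z - snd z) powr (real DIM('a) + s * p))"
  by (rule integrableI_nonneg) (use assms(2) in \<open>auto simp: gagliardo_pow_def\<close>)

lemma integrable_frac_plap_integrand:
  fixes u \<phi> :: "'a::euclidean_space \<Rightarrow> real"
  assumes p: "1 < p" and [measurable]: "u \<in> borel_measurable borel" "\<phi> \<in> borel_measurable borel"
    and gu: "gagliardo_pow s p u < \<infinity>" and g\<phi>: "gagliardo_pow s p \<phi> < \<infinity>"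
  shows "integrable (lborel \<Otimes>\<^sub>M lborel) (frac_plap_integrand s p u \<phi>)"
proof (rule Bochner_Integration.integrable_bound)
  let ?K = "\<lambda>z::'a \<times> 'a. norm (fst z - snd z) powr (real DIM('a) + s * p)"
  show "integrable (lborel \<Otimes>\<^sub>M lborel)
      (\<lambda>z. \<bar>u (fst z) - u (snd z)\<bar> powr p / ?K z + \<bar>\<phi> (fst z) - \<phi> (snd z)\<bar> powr p / ?K z)"
    by (intro Bochner_Integration.integrable_add integrable_gagliardo_density gu g\<phi>) measurable
  show "AE z in lborel \<Otimes>\<^sub>M lborel. norm (frac_plap_integrand s p u \<phi> z)
      \<le> norm (\<bar>u (fst z) - u (snd z)\<bar> powr p / ?K z + \<bar>\<phi> (fst z) - \<phi> (snd z)\<bar> powr p / ?K z)"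
  proof (intro AE_I2)
    fix z :: "'a \<times> 'a"
    have "\<bar>Jp p (u (fst z) - u (snd z)) * (\<phi> (fst z) - \<phi> (snd z))\<bar>
        \<le> \<bar>u (fst z) - u (snd z)\<bar> powr p + \<bar>\<phi> (fst z) - \<phi> (snd z)\<bar> powr p"
      using p by (rule abs_Jp_mult_le) simp
    then show "norm (frac_plap_integrand s p u \<phi> z)
        \<le> norm (\<bar>u (fst z) - u (snd z)\<bar> powr p / ?K z + \<bar>\<phi> (fst z) - \<phi> (snd z)\<bar> powr p / ?K z)"
      by (simp add: frac_plap_integrand_def abs_div_pos divide_right_mono add_divide_distrib[symmetric])
  qed
qed (unfold frac_plap_integrand_def, measurable)

lemma gagliardo_pow_finite_if_diff_le:
  fixes f g h :: "'a::euclidean_space \<Rightarrow> real"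
  assumes p: "0 < p" and [measurable]: "g \<in> borel_measurable borel" "h \<in> borel_measurable borel"
    and gg: "gagliardo_pow s p g < \<infinity>" and gh: "gagliardo_pow s p h < \<infinity>" and c: "0 \<le> c"
    and diff: "\<And>x y. \<bar>f x - f y\<bar> \<le> \<bar>g x - g y\<bar> + c * \<bar>h x - h y\<bar>"
  shows "gagliardo_pow s p f < \<infinity>"
proof -
  define K where "K z = norm (fst z - snd z) powr (real DIM('a) + s * p)" for z :: "'a \<times> 'a"
  have "ennreal (\<bar>f (fst z) - f (snd z)\<bar> powr p / K z)
      \<le> ennreal (2 powr p) * ennreal (\<bar>g (fst z) - g (snd z)\<bar> powr p / K z)
        + ennreal (2 powr p * c powr p) * ennreal (\<bar>h (fst z) - h (snd z)\<bar> powr p / K z)" for z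
  proof -
    have K0: "0 \<le> K z" by (simp add: K_def)
    have "\<bar>f (fst z) - f (snd z)\<bar> powr p
        \<le> (\<bar>g (fst z) - g (snd z)\<bar> + c * \<bar>h (fst z) - h (snd z)\<bar>) powr p"
      using diff p by (intro powr_mono2) auto
    also have "\<dots> \<le> 2 powr p * (\<bar>g (fst z) - g (snd z)\<bar> powr p + (c * \<bar>h (fst z) - h (snd z)\<bar>) powr p)"
      using p c by (intro powr_add_le) auto
    also have "\<dots> = 2 powr p * \<bar>g (fst z) - g (snd z)\<bar> powr p
        + 2 powr p * c powr p * \<bar>h (fst z) - h (snd z)\<bar> powr p"
      using c by (simp add: powr_mult algebra_simps)
    finally have "\<bar>f (fst z) - f (snd z)\<bar> powr p / K z
        \<le> 2 powr p * (\<bar>g (fst z) - g (snd z)\<bar> powr p / K z)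
          + 2 powr p * c powr p * (\<bar>h (fst z) - h (snd z)\<bar> powr p / K z)"
      using K0 by (metis (no_types, lifting) add_divide_distrib divide_right_mono times_divide_eq_right)
    then show ?thesis
      using K0 c by (simp add: ennreal_mult[symmetric] ennreal_plus[symmetric] ennreal_leI del: ennreal_plus)
  qed
  then have "gagliardo_pow s p f
      \<le> (\<integral>\<^sup>+z. ennreal (2 powr p) * ennreal (\<bar>g (fst z) - g (snd z)\<bar> powr p / K z)
        + ennreal (2 powr p * c powr p) * ennreal (\<bar>h (fst z) - h (snd z)\<bar> powr p / K z) \<partial>(lborel \<Otimes>\<^sub>M lborel))"
    unfolding gagliardo_pow_def K_def by (intro nn_integral_mono) auto
  also have "\<dots> = ennreal (2 powr p) * gagliardo_pow s p g + ennreal (2 powr p * c powr p) * gagliardo_pow s p h"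
    unfolding gagliardo_pow_def K_def by (subst nn_integral_add) (auto simp: nn_integral_cmult)
  also have "\<dots> < \<infinity>" using gg gh by (simp add: ennreal_mult_less_top)
  finally show ?thesis .
qed

lemma gagliardo_pow_pos_part_diff_finite:
  fixes \<eta> u :: "'a::euclidean_space \<Rightarrow> real"
  assumes "0 < p" "0 \<le> c" "\<eta> \<in> borel_measurable borel" "u \<in> borel_measurable borel"
    "gagliardo_pow s p \<eta> < \<infinity>" "gagliardo_pow s p u < \<infinity>"
  shows "gagliardo_pow s p (\<lambda>x. max 0 (\<eta> x - c * u x)) < \<infinity>"
proof (rule gagliardo_pow_finite_if_diff_le[where g=\<eta> and h=u and c=c])
  fix x y
  have "\<bar>max 0 (\<eta> x - c * u x) - max 0 (\<eta> y - c * u y)\<bar> \<le> \<bar>(\<eta> x - \<eta> y) - c * (u x - u y)\<bar>"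
    using abs_max_0_diff_le[of "\<eta> x - c * u x" "\<eta> y - c * u y"] by (simp add: algebra_simps)
  also have "\<dots> \<le> \<bar>\<eta> x - \<eta> y\<bar> + c * \<bar>u x - u y\<bar>"
    using abs_triangle_ineq4[of "\<eta> x - \<eta> y" "c * (u x - u y)"] \<open>0 \<le> c\<close> by (simp add: abs_mult)
  finally show "\<bar>max 0 (\<eta> x - c * u x) - max 0 (\<eta> y - c * u y)\<bar> \<le> \<bar>\<eta> x - \<eta> y\<bar> + c * \<bar>u x - u y\<bar>" .
qed (use assms in auto)

lemma integrable_powr_bounded_support:
  fixes f :: "'a \<Rightarrow> real"
  assumes [measurable]: "f \<in> borel_measurable M" "\<Omega> \<in> sets M" and fin: "emeasure M \<Omega> < \<infinity>"
    and bnd: "\<And>x. \<bar>f x\<bar> \<le> C" and supp: "\<And>x. x \<notin> \<Omega> \<Longrightarrow> f x = 0" and e: "0 < e"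
  shows "integrable M (\<lambda>x. \<bar>f x\<bar> powr e)"
proof (rule Bochner_Integration.integrable_bound)
  show "integrable M (\<lambda>x. C powr e * indicator \<Omega> x :: real)"
    using fin by (intro integrable_mult_right integrable_real_indicator) auto
  show "AE x in M. norm (\<bar>f x\<bar> powr e) \<le> norm (C powr e * indicator \<Omega> x :: real)"
    using bnd supp e by (intro AE_I2) (auto simp: indicator_def intro: powr_mono2)
qed measurable

lemma infdist_compl_bounded:
  fixes \<Omega> :: "'a::euclidean_space set"
  assumes "bounded \<Omega>"
  obtains C where "0 < C" "\<And>x. infdist x (- \<Omega>) \<le> C"
proof -
  obtain R where R: "0 < R" "\<And>x. x \<in> \<Omega> \<Longrightarrow> norm x \<le> R"
    using assms by (auto simp: bounded_pos)
  have "\<Omega> \<noteq> UNIV" using assms by auto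
  then obtain w where w: "w \<notin> \<Omega>" by auto
  have "infdist x (- \<Omega>) \<le> R + norm w" for x
  proof (cases "x \<in> \<Omega>")
    case True
    have "infdist x (- \<Omega>) \<le> dist x w" using w by (intro infdist_le) auto
    also have "\<dots> \<le> norm x + norm w" by (simp add: dist_norm norm_triangle_ineq4)
    finally show ?thesis using R(2)[OF True] by simp
  qed (use R in simp)
  then show ?thesis using R by (intro that[of "R + norm w"]) (auto intro: add_pos_nonneg)
qed

lemma infdist_compl_pos:
  fixes \<Omega> :: "'a::euclidean_space set"
  assumes "open \<Omega>" "bounded \<Omega>" "x \<in> \<Omega>"
  shows "0 < infdist x (- \<Omega>)"
proof -
  have "\<Omega> \<noteq> UNIV" using assms(2) by auto
  with assms show ?thesis by (auto simp: closed_Compl intro!: infdist_pos_not_in_closed)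
qed

lemma frac_crit_exp_pos:
  assumes "0 < s" "0 < p" "s * p < real N"
  shows "0 < frac_crit_exp N s p"
proof -
  have "0 < s * p" using assms by simp
  then have "0 < real N" "0 < real N - s * p" using assms by linarith+
  then show ?thesis unfolding frac_crit_exp_def using assms by (auto intro!: divide_pos_pos mult_pos_pos)
qed

lemma infdist_compl_in_Dsp0:
  fixes \<Omega> :: "'a::euclidean_space set"
  assumes s: "0 < s" "s < 1" and p: "0 < p" and sp: "s * p < real DIM('a)"
    and \<Omega>: "open \<Omega>" "bounded \<Omega>"
  shows "(\<lambda>x. infdist x (- \<Omega>)) \<in> Dsp0 s p \<Omega>"
proof -
  obtain C where C: "0 < C" "\<And>x. infdist x (- \<Omega>) \<le> C" using infdist_compl_bounded[OF \<Omega>(2)] by blast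
  have meas: "(\<lambda>x. infdist x (- \<Omega>)) \<in> borel_measurable borel"
    by (intro borel_measurable_continuous_onI continuous_intros)
  have \<Omega>_sets: "\<Omega> \<in> sets lborel" using \<Omega>(1) by simp
  have bnd: "\<bar>infdist x (- \<Omega>)\<bar> \<le> C" for x using C(2)[of x] by (simp add: infdist_nonneg)
  have "integrable lborel (\<lambda>x. \<bar>infdist x (- \<Omega>)\<bar> powr frac_crit_exp DIM('a) s p)"
    using meas \<Omega>_sets emeasure_bounded_finite[OF \<Omega>(2)] bnd frac_crit_exp_pos[OF s(1) p sp]
    by (intro integrable_powr_bounded_support[where C=C and \<Omega>=\<Omega>]) auto
  moreover have "gagliardo_pow s p (\<lambda>x. infdist x (- \<Omega>)) < \<infinity>"
    using s p C(1) \<Omega>_sets \<Omega>(2) infdist_triangle_abs bnd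
    by (intro gagliardo_pow_lipschitz_finite[where C=C and \<Omega>=\<Omega>]) auto
  ultimately show ?thesis using meas by (auto simp: Dsp0_def Dsp0_RN_def)
qed

lemma Dsp0_pos_part_diff:
  fixes \<eta> u :: "'a::euclidean_space \<Rightarrow> real"
  assumes s: "0 < s" and p: "0 < p" and sp: "s * p < real DIM('a)" and c: "0 \<le> c"
    and \<eta>: "\<eta> \<in> Dsp0 s p \<Omega>" "\<And>x. 0 \<le> \<eta> x"
    and u: "u \<in> Dsp0 s p \<Omega>" "AE x in lborel. 0 \<le> u x"
  shows "(\<lambda>x. max 0 (\<eta> x - c * u x)) \<in> Dsp0 s p \<Omega>"
proof -
  let ?P = "frac_crit_exp DIM('a) s p"
  have [measurable]: "\<eta> \<in> borel_measurable borel" "u \<in> borel_measurable borel"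
    using \<eta>(1) u(1) by (auto simp: Dsp0_def Dsp0_RN_def)
  have le_\<eta>: "AE x in lborel. \<bar>max 0 (\<eta> x - c * u x)\<bar> \<le> \<eta> x"
    using u(2) by eventually_elim (use c \<eta>(2) in \<open>auto intro: mult_nonneg_nonneg\<close>)
  have "integrable lborel (\<lambda>x. \<bar>max 0 (\<eta> x - c * u x)\<bar> powr ?P)"
  proof (rule Bochner_Integration.integrable_bound)
    show "integrable lborel (\<lambda>x. \<bar>\<eta> x\<bar> powr ?P)" using \<eta>(1) by (simp add: Dsp0_def Dsp0_RN_def)
    show "AE x in lborel. norm (\<bar>max 0 (\<eta> x - c * u x)\<bar> powr ?P) \<le> norm (\<bar>\<eta> x\<bar> powr ?P)"
      using le_\<eta> by eventually_elim (use frac_crit_exp_pos[OF s p sp] in \<open>auto intro: powr_mono2\<close>)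
  qed measurable
  moreover have "AE x in lborel. x \<notin> \<Omega> \<longrightarrow> max 0 (\<eta> x - c * u x) = 0"
  proof -
    have "AE x in lborel. x \<notin> \<Omega> \<longrightarrow> \<eta> x = 0" using \<eta>(1) by (simp add: Dsp0_def Dsp0_RN_def)
    with u(2) show ?thesis by eventually_elim (use c in auto)
  qed
  moreover have "gagliardo_pow s p (\<lambda>x. max 0 (\<eta> x - c * u x)) < \<infinity>"
    using \<eta>(1) u(1) by (intro gagliardo_pow_pos_part_diff_finite p c) (auto simp: Dsp0_def Dsp0_RN_def)
  ultimately show ?thesis by (auto simp: Dsp0_def Dsp0_RN_def)
qed

section \<open>Limits of the potential terms\<close>

lemma set_integrable_powr_le_crit:
  fixes u :: "'a \<Rightarrow> real"
  assumes [measurable]: "\<Omega> \<in> sets M" "u \<in> borel_measurable M" and fin: "emeasure M \<Omega> < \<infinity>"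
    and u: "AE x in M. 0 \<le> u x" "integrable M (\<lambda>x. \<bar>u x\<bar> powr P)" and e: "0 \<le> e" "e \<le> P"
  shows "set_integrable M \<Omega> (\<lambda>x. u x powr e)"
  unfolding set_integrable_def
proof (rule Bochner_Integration.integrable_bound)
  show "integrable M (\<lambda>x. indicator \<Omega> x + \<bar>u x\<bar> powr P :: real)"
    using fin u(2) by (intro Bochner_Integration.integrable_add integrable_real_indicator) auto
  show "AE x in M. norm (indicator \<Omega> x *\<^sub>R u x powr e) \<le> norm (indicator \<Omega> x + \<bar>u x\<bar> powr P :: real)"
    using u(1) by eventually_elim (use e in \<open>auto simp: indicator_def intro: powr_le_one_add_powr\<close>)
qed measurable

lemma set_integrable_mult_powr_le_crit:
  fixes a u :: "'a \<Rightarrow> real"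
  assumes [measurable]: "\<Omega> \<in> sets M" "a \<in> borel_measurable M" "u \<in> borel_measurable M"
    and fin: "emeasure M \<Omega> < \<infinity>"
    and a: "set_integrable M \<Omega> (\<lambda>x. \<bar>a x\<bar> powr \<alpha>)"
    and u: "AE x in M. 0 \<le> u x" "integrable M (\<lambda>x. \<bar>u x\<bar> powr P)"
    and conj: "1 < \<alpha>" "1 < \<beta>" "1/\<alpha> + 1/\<beta> = 1" and e: "0 \<le> e" "e * \<beta> \<le> P"
  shows "set_integrable M \<Omega> (\<lambda>x. a x * u x powr e)"
  unfolding set_integrable_def
proof (rule Bochner_Integration.integrable_bound)
  show "integrable M (\<lambda>x. indicator \<Omega> x *\<^sub>R \<bar>a x\<bar> powr \<alpha> + indicator \<Omega> x *\<^sub>R u x powr (e * \<beta>))"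
    using a set_integrable_powr_le_crit[OF _ _ fin u] e conj
    by (intro Bochner_Integration.integrable_add) (auto simp: set_integrable_def)
  show "AE x in M. norm (indicator \<Omega> x *\<^sub>R (a x * u x powr e))
      \<le> norm (indicator \<Omega> x *\<^sub>R \<bar>a x\<bar> powr \<alpha> + indicator \<Omega> x *\<^sub>R u x powr (e * \<beta>))"
    using u(1)
  proof eventually_elim
    case (elim x)
    have "\<bar>a x\<bar> * u x powr e \<le> \<bar>a x\<bar> powr \<alpha> + (u x powr e) powr \<beta>"
      using conj by (intro mult_le_powr_add_powr) auto
    then show ?case using elim by (auto simp: indicator_def abs_mult powr_powr)
  qed
qed measurable

lemma set_integrable_potential_mult_powr:
  fixes a u :: "'a::euclidean_space \<Rightarrow> real"
  assumes s: "0 < s" and p: "1 < p" and sp: "s * p < real DIM('a)"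
    and \<Omega>: "\<Omega> \<in> sets lborel" "emeasure lborel \<Omega> < \<infinity>"
    and a: "a \<in> borel_measurable lborel" "set_integrable lborel \<Omega> (\<lambda>x. \<bar>a x\<bar> powr (real DIM('a) / (s * p)))"
    and u: "u \<in> borel_measurable lborel" "AE x in lborel. 0 \<le> u x"
      "integrable lborel (\<lambda>x. \<bar>u x\<bar> powr frac_crit_exp DIM('a) s p)"
  shows "set_integrable lborel \<Omega> (\<lambda>x. a x * u x powr (p - 1))"
proof (rule set_integrable_mult_powr_le_crit[OF \<Omega>(1) a(1) u(1) \<Omega>(2) a(2) u(2,3),
      where \<beta>="real DIM('a) / (real DIM('a) - s * p)"])
  show "1 < real DIM('a) / (s * p)" "1 < real DIM('a) / (real DIM('a) - s * p)"
    "1 / (real DIM('a) / (s * p)) + 1 / (real DIM('a) / (real DIM('a) - s * p)) = 1"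
    using s p sp by (auto simp: field_simps)
  have "(p - 1) * real DIM('a) \<le> real DIM('a) * p" by (simp add: algebra_simps)
  then show "(p - 1) * (real DIM('a) / (real DIM('a) - s * p)) \<le> frac_crit_exp DIM('a) s p"
    using sp by (simp add: frac_crit_exp_def divide_right_mono)
qed (use p in simp)

lemma eventually_max_0_diff_mult_eq_0:
  fixes e t :: real
  assumes "0 < t"
  shows "\<forall>\<^sub>F n in sequentially. max 0 (e - real n * t) = 0"
proof -
  obtain m :: nat where m: "e / t \<le> real m" using real_arch_simple by blast
  have "max 0 (e - real n * t) = 0" if "m \<le> n" for n
  proof -
    have "e \<le> real m * t" using m assms by (simp add: pos_divide_le_eq)
    also have "\<dots> \<le> real n * t" using that assms by (intro mult_right_mono) auto
    finally show ?thesis by simp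
  qed
  then show ?thesis unfolding eventually_sequentially by blast
qed

lemma tendsto_set_integral_mult_pos_part_0:
  fixes g u \<eta> :: "'a \<Rightarrow> real"
  assumes g: "set_integrable M \<Omega> g" and [measurable]: "u \<in> borel_measurable M" "\<eta> \<in> borel_measurable M"
    and u: "AE x in M. 0 \<le> u x" and \<eta>: "\<And>x. 0 \<le> \<eta> x" "\<And>x. \<eta> x \<le> C"
    and g_0: "\<And>x. u x = 0 \<Longrightarrow> g x = 0"
  shows "(\<lambda>n. LINT x:\<Omega>|M. g x * max 0 (\<eta> x - real n * u x)) \<longlonglongrightarrow> 0"
proof -
  let ?g = "\<lambda>x. indicator \<Omega> x *\<^sub>R g x"
  have gi: "integrable M ?g" using g by (simp add: set_integrable_def)
  have [measurable]: "?g \<in> borel_measurable M" using gi by (rule borel_measurable_integrable)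
  have "(\<lambda>n. \<integral>x. ?g x * max 0 (\<eta> x - real n * u x) \<partial>M) \<longlonglongrightarrow> (\<integral>x. 0 \<partial>M)"
  proof (rule integral_dominated_convergence[where w="\<lambda>x. C * norm (?g x)"])
    show "integrable M (\<lambda>x. C * norm (?g x))" using gi by (intro integrable_mult_right integrable_norm)
    show "AE x in M. (\<lambda>n. ?g x * max 0 (\<eta> x - real n * u x)) \<longlonglongrightarrow> 0"
      using u
    proof eventually_elim
      case (elim x)
      show ?case
      proof (cases "u x = 0")
        case False
        with elim have "0 < u x" by simp
        then have "\<forall>\<^sub>F n in sequentially. max 0 (\<eta> x - real n * u x) = 0"
          by (rule eventually_max_0_diff_mult_eq_0)
        then have "(\<lambda>n. max 0 (\<eta> x - real n * u x)) \<longlonglongrightarrow> 0" by (rule tendsto_eventually)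
        then show ?thesis by (rule tendsto_mult_right_zero)
      qed (simp add: g_0)
    qed
    show "AE x in M. norm (?g x * max 0 (\<eta> x - real n * u x)) \<le> C * norm (?g x)" for n
      using u
    proof eventually_elim
      case (elim x)
      then have "0 \<le> real n * u x" by simp
      then have "\<bar>max 0 (\<eta> x - real n * u x)\<bar> \<le> C" using \<eta>[of x] by simp
      then have "norm (?g x) * \<bar>max 0 (\<eta> x - real n * u x)\<bar> \<le> norm (?g x) * C"
        by (intro mult_left_mono) auto
      then show ?case by (simp add: abs_mult mult_ac)
    qed
  qed measurable
  then show ?thesis by (simp add: set_lebesgue_integral_def mult.assoc)
qed

section \<open>Limit of the nonlocal term\<close>

lemma Fatou_dominated_limit_nonneg:
  fixes a b :: "nat \<Rightarrow> 'a \<Rightarrow> real" and F B w :: "'a \<Rightarrow> real" and r :: "nat \<Rightarrow> real"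
  assumes a_int: "\<And>n. integrable M (a n)" and a_nonpos: "\<And>n x. a n x \<le> 0"
    and a_lim: "AE x in M. (\<lambda>n. a n x) \<longlonglongrightarrow> - F x" and F_meas: "F \<in> borel_measurable M"
    and b_meas: "\<And>n. b n \<in> borel_measurable M" and w: "integrable M w"
    and b_bnd: "\<And>n. AE x in M. norm (b n x) \<le> w x"
    and b_lim: "AE x in M. (\<lambda>n. b n x) \<longlonglongrightarrow> B x" and B_meas: "B \<in> borel_measurable M"
    and r_le: "\<And>n. r n \<le> integral\<^sup>L M (a n) + integral\<^sup>L M (b n)" and r_lim: "r \<longlonglongrightarrow> 0"
  shows "integrable M (\<lambda>x. B x - F x)" and "0 \<le> (\<integral>x. B x - F x \<partial>M)"
proof -
  define c where "c n = integral\<^sup>L M (b n) - r n" for n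
  have B_int: "integrable M B"
    using B_meas b_meas w b_lim b_bnd by (rule integrable_dominated_convergence)
  have "(\<lambda>n. integral\<^sup>L M (b n)) \<longlonglongrightarrow> integral\<^sup>L M B"
    using B_meas b_meas w b_lim b_bnd by (rule integral_dominated_convergence)
  then have c_lim: "c \<longlonglongrightarrow> integral\<^sup>L M B"
    unfolding c_def using tendsto_diff[OF _ r_lim] by fastforce
  have a_int_nonpos: "integral\<^sup>L M (a n) \<le> 0" for n
    using integral_nonneg_AE[of "\<lambda>x. - a n x" M] a_nonpos by simp
  have neg_a_le: "- integral\<^sup>L M (a n) \<le> c n" for n
    using r_le[of n] by (simp add: c_def)
  have c_nonneg: "0 \<le> c n" for n
    using a_int_nonpos[of n] neg_a_le[of n] by linarith
  have B_nonneg: "0 \<le> integral\<^sup>L M B"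
    using c_lim by (rule tendsto_lowerbound) (use c_nonneg in \<open>auto intro: always_eventually\<close>)
  have F_nonneg: "AE x in M. 0 \<le> F x"
    using a_lim
  proof eventually_elim
    case (elim x)
    then have "(\<lambda>n. - a n x) \<longlonglongrightarrow> F x" using tendsto_minus by fastforce
    then show ?case by (rule tendsto_lowerbound) (use a_nonpos in \<open>auto intro: always_eventually\<close>)
  qed
  have "(\<integral>\<^sup>+x. ennreal (F x) \<partial>M) = (\<integral>\<^sup>+x. liminf (\<lambda>n. ennreal (- a n x)) \<partial>M)"
    using a_lim
  proof (intro nn_integral_cong_AE, eventually_elim)
    case (elim x)
    then have "(\<lambda>n. ennreal (- a n x)) \<longlonglongrightarrow> ennreal (F x)"
      using tendsto_minus by (fastforce intro: tendsto_ennrealI)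
    then show ?case by (simp add: lim_imp_Liminf)
  qed
  also have "\<dots> \<le> liminf (\<lambda>n. \<integral>\<^sup>+x. ennreal (- a n x) \<partial>M)"
    using a_int by (intro nn_integral_liminf) auto
  also have "\<dots> \<le> liminf (\<lambda>n. ennreal (c n))"
  proof (intro Liminf_mono always_eventually allI)
    fix n
    have "(\<integral>\<^sup>+x. ennreal (- a n x) \<partial>M) = ennreal (- integral\<^sup>L M (a n))"
      using a_int[of n] a_nonpos by (subst nn_integral_eq_integral) auto
    then show "(\<integral>\<^sup>+x. ennreal (- a n x) \<partial>M) \<le> ennreal (c n)"
      using neg_a_le[of n] by (simp add: ennreal_leI)
  qed
  also have "\<dots> = ennreal (integral\<^sup>L M B)"
    using c_lim by (intro lim_imp_Liminf tendsto_ennrealI) auto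
  finally have F_le: "(\<integral>\<^sup>+x. ennreal (F x) \<partial>M) \<le> ennreal (integral\<^sup>L M B)" .
  have F_int: "integrable M F"
  proof (rule integrableI_nonneg)
    show "(\<integral>\<^sup>+x. ennreal (F x) \<partial>M) < \<infinity>" by (rule le_less_trans[OF F_le]) simp
  qed (use F_meas F_nonneg in auto)
  have "ennreal (integral\<^sup>L M F) = (\<integral>\<^sup>+x. ennreal (F x) \<partial>M)"
    using F_int F_nonneg by (rule nn_integral_eq_integral[symmetric])
  also note F_le
  finally have "integral\<^sup>L M F \<le> integral\<^sup>L M B"
    using B_nonneg by (simp add: ennreal_le_iff)
  with B_int F_int show "integrable M (\<lambda>x. B x - F x)" "0 \<le> (\<integral>x. B x - F x \<partial>M)"
    by simp_all
qed

lemma AE_pair_lborel_fst_snd: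
  fixes P :: "'a::euclidean_space \<Rightarrow> bool"
  assumes [measurable]: "Measurable.pred borel P" and P: "AE x in lborel. P x"
  shows "AE z in lborel \<Otimes>\<^sub>M lborel. P (fst z) \<and> P (snd z)"
proof -
  have "{x. \<not> P x} \<in> null_sets lborel"
    using P by (subst AE_iff_null_sets) auto
  then have "{x. \<not> P x} \<times> UNIV \<in> null_sets (lborel \<Otimes>\<^sub>M lborel)"
      and "UNIV \<times> {x. \<not> P x} \<in> null_sets (lborel \<Otimes>\<^sub>M lborel)"
    by (intro lborel.times_in_null_sets1 lborel.times_in_null_sets2; simp)+
  then have "{x. \<not> P x} \<times> UNIV \<union> UNIV \<times> {x. \<not> P x} \<in> null_sets (lborel \<Otimes>\<^sub>M lborel)"
    by auto
  then show ?thesis by (rule AE_I') auto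
qed

lemma integral_pos_if_pos_on_nonnull:
  fixes f :: "'a \<Rightarrow> real"
  assumes f: "integrable M f" "AE x in M. 0 \<le> f x"
    and S: "S \<in> sets M" "S \<notin> null_sets M" "\<And>x. x \<in> S \<Longrightarrow> 0 < f x"
  shows "0 < integral\<^sup>L M f"
proof -
  have "integral\<^sup>L M f \<noteq> 0"
  proof
    assume "integral\<^sup>L M f = 0"
    then have "AE x in M. f x = 0" using integral_nonneg_eq_0_iff_AE[OF f] by simp
    then have "AE x in M. x \<notin> S" by eventually_elim (use S(3) in force)
    with S(1,2) show False by (simp add: AE_iff_null_sets)
  qed
  with integral_nonneg_AE[OF f(2)] show ?thesis by simp
qed

lemma frac_plap_integrand_limit_nonneg:
  fixes u \<eta> :: "'a::euclidean_space \<Rightarrow> real" and c e :: "nat \<Rightarrow> real"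
  assumes p: "1 < p"
    and u[measurable]: "u \<in> borel_measurable borel" and gu: "gagliardo_pow s p u < \<infinity>"
    and u_nonneg: "AE x in lborel. 0 \<le> u x"
    and \<eta>[measurable]: "\<eta> \<in> borel_measurable borel" and g\<eta>: "gagliardo_pow s p \<eta> < \<infinity>"
    and \<eta>_nonneg: "\<And>x. 0 \<le> \<eta> x"
    and le: "\<And>n. c n \<le> integral\<^sup>L (lborel \<Otimes>\<^sub>M lborel)
                 (frac_plap_integrand s p u (\<lambda>x. max 0 (\<eta> x - real n * u x))) + e n"
    and c: "c \<longlonglongrightarrow> 0" and e: "e \<longlonglongrightarrow> 0"
  defines "\<psi> \<equiv> \<lambda>x. if u x = 0 then \<eta> x else 0"
  shows "integrable (lborel \<Otimes>\<^sub>M lborel) (frac_plap_integrand s p u \<psi>)"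
    and "0 \<le> integral\<^sup>L (lborel \<Otimes>\<^sub>M lborel) (frac_plap_integrand s p u \<psi>)"
proof -
  define K where "K z = norm (fst z - snd z) powr (real DIM('a) + s * p)" for z :: "'a \<times> 'a"
  define d where "d z = u (fst z) - u (snd z)" for z :: "'a \<times> 'a"
  define h where "h n x t = max 0 (\<eta> x - real n * t)" for n x and t :: real
  define hlim where "hlim x t = (if t = 0 then \<eta> x else 0)" for x and t :: real
  \<comment> \<open>\<open>h n x\<close> is antitone, so \<open>a n \<le> 0\<close>; \<open>b n\<close> is dominated since \<open>|h n x t - h n y t| \<le> |\<eta> x - \<eta> y|\<close>.\<close>
  define a where "a n z = Jp p (d z) * (h n (fst z) (u (fst z)) - h n (fst z) (u (snd z))) / K z" for n z
  define b where "b n z = Jp p (d z) * (h n (fst z) (u (snd z)) - h n (snd z) (u (snd z))) / K z" for n z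
  define F where "F z = - (Jp p (d z) * (hlim (fst z) (u (fst z)) - hlim (fst z) (u (snd z))) / K z)" for z
  define B where "B z = Jp p (d z) * (hlim (fst z) (u (snd z)) - hlim (snd z) (u (snd z))) / K z" for z
  define W where "W z = (\<bar>d z\<bar> powr p + \<bar>\<eta> (fst z) - \<eta> (snd z)\<bar> powr p) / K z" for z
  have a_meas: "a n \<in> borel_measurable (lborel \<Otimes>\<^sub>M lborel)" for n
    unfolding a_def h_def d_def K_def by measurable
  have b_meas: "b n \<in> borel_measurable (lborel \<Otimes>\<^sub>M lborel)" for n
    unfolding b_def h_def d_def K_def by measurable
  have F_meas: "F \<in> borel_measurable (lborel \<Otimes>\<^sub>M lborel)"
    unfolding F_def hlim_def d_def K_def by measurable
  have B_meas: "B \<in> borel_measurable (lborel \<Otimes>\<^sub>M lborel)"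
    unfolding B_def hlim_def d_def K_def by measurable
  have h_eventually: "\<forall>\<^sub>F n in sequentially. h n x t = hlim x t" if "0 \<le> t" for x t
  proof (cases "t = 0")
    case False
    with that have "0 < t" by simp
    with False show ?thesis
      unfolding h_def hlim_def by (simp add: eventually_max_0_diff_mult_eq_0)
  qed (simp add: h_def hlim_def \<eta>_nonneg)
  have u_nonneg2: "AE z in lborel \<Otimes>\<^sub>M lborel. 0 \<le> u (fst z) \<and> 0 \<le> u (snd z)"
    by (rule AE_pair_lborel_fst_snd[OF _ u_nonneg]) measurable
  have split_n: "frac_plap_integrand s p u (\<lambda>x. max 0 (\<eta> x - real n * u x)) = (\<lambda>z. a n z + b n z)" for n
    unfolding frac_plap_integrand_def a_def b_def h_def d_def K_def
    by (simp add: add_divide_distrib[symmetric] algebra_simps)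
  have split_\<psi>: "frac_plap_integrand s p u \<psi> = (\<lambda>z. B z - F z)"
    unfolding frac_plap_integrand_def B_def F_def hlim_def \<psi>_def d_def K_def
    by (simp add: add_divide_distrib[symmetric] algebra_simps)
  have W_int: "integrable (lborel \<Otimes>\<^sub>M lborel) W"
  proof -
    have "integrable (lborel \<Otimes>\<^sub>M lborel) (\<lambda>z. \<bar>d z\<bar> powr p / K z + \<bar>\<eta> (fst z) - \<eta> (snd z)\<bar> powr p / K z)"
      unfolding d_def K_def by (intro Bochner_Integration.integrable_add integrable_gagliardo_density gu g\<eta>) measurable
    then show ?thesis unfolding W_def by (simp add: add_divide_distrib)
  qed
  have b_bnd: "AE z in lborel \<Otimes>\<^sub>M lborel. norm (b n z) \<le> W z" for n
  proof (intro AE_I2)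
    fix z :: "'a \<times> 'a"
    have "\<bar>Jp p (d z) * (h n (fst z) (u (snd z)) - h n (snd z) (u (snd z)))\<bar>
        \<le> \<bar>d z\<bar> powr p + \<bar>\<eta> (fst z) - \<eta> (snd z)\<bar> powr p"
      unfolding h_def by (intro abs_Jp_mult_le p order_trans[OF abs_max_0_diff_le]) simp
    then show "norm (b n z) \<le> W z"
      unfolding b_def W_def by (simp add: K_def abs_div_pos divide_right_mono)
  qed
  have b_int: "integrable (lborel \<Otimes>\<^sub>M lborel) (b n)" for n
  proof (rule Bochner_Integration.integrable_bound[OF W_int b_meas])
    show "AE z in lborel \<Otimes>\<^sub>M lborel. norm (b n z) \<le> norm (W z)"
      using b_bnd[of n] by eventually_elim (auto intro: order_trans[OF _ abs_ge_self])
  qed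
  have a_int: "integrable (lborel \<Otimes>\<^sub>M lborel) (a n)" for n
  proof -
    have "integrable (lborel \<Otimes>\<^sub>M lborel) (frac_plap_integrand s p u (\<lambda>x. max 0 (\<eta> x - real n * u x)))"
      using p gu g\<eta> \<eta>_nonneg by (intro integrable_frac_plap_integrand gagliardo_pow_pos_part_diff_finite) auto
    then have "integrable (lborel \<Otimes>\<^sub>M lborel) (\<lambda>z. (a n z + b n z) - b n z)"
      using b_int[of n] unfolding split_n by (rule Bochner_Integration.integrable_diff)
    then show ?thesis by simp
  qed
  have a_nonpos: "a n z \<le> 0" for n z
  proof -
    have "antimono (h n (fst z))"
      unfolding h_def by (intro antimonoI max.mono) (simp_all add: mult_left_mono)
    then show ?thesis
      unfolding a_def d_def K_def by (intro divide_nonpos_nonneg Jp_diff_mult_antimono_nonpos) auto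
  qed
  have a_lim: "AE z in lborel \<Otimes>\<^sub>M lborel. (\<lambda>n. a n z) \<longlonglongrightarrow> - F z"
    using u_nonneg2
  proof eventually_elim
    case (elim z)
    then have "\<forall>\<^sub>F n in sequentially. h n (fst z) (u (fst z)) = hlim (fst z) (u (fst z))
        \<and> h n (fst z) (u (snd z)) = hlim (fst z) (u (snd z))"
      by (intro eventually_conj h_eventually) auto
    then have "\<forall>\<^sub>F n in sequentially. a n z = - F z"
      by eventually_elim (simp add: a_def F_def)
    then show ?case by (rule tendsto_eventually)
  qed
  have b_lim: "AE z in lborel \<Otimes>\<^sub>M lborel. (\<lambda>n. b n z) \<longlonglongrightarrow> B z"
    using u_nonneg2
  proof eventually_elim
    case (elim z)
    then have "\<forall>\<^sub>F n in sequentially. h n (fst z) (u (snd z)) = hlim (fst z) (u (snd z))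
        \<and> h n (snd z) (u (snd z)) = hlim (snd z) (u (snd z))"
      by (intro eventually_conj h_eventually) auto
    then have "\<forall>\<^sub>F n in sequentially. b n z = B z"
      by eventually_elim (simp add: b_def B_def)
    then show ?case by (rule tendsto_eventually)
  qed
  have r_le: "c n - e n \<le> integral\<^sup>L (lborel \<Otimes>\<^sub>M lborel) (a n) + integral\<^sup>L (lborel \<Otimes>\<^sub>M lborel) (b n)" for n
    using le[of n] a_int[of n] b_int[of n] by (simp add: split_n)
  have r_lim: "(\<lambda>n. c n - e n) \<longlonglongrightarrow> 0" using tendsto_diff[OF c e] by simp
  from Fatou_dominated_limit_nonneg[OF a_int a_nonpos a_lim F_meas b_meas W_int b_bnd b_lim B_meas r_le r_lim]
  show "integrable (lborel \<Otimes>\<^sub>M lborel) (frac_plap_integrand s p u \<psi>)"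
    and "0 \<le> integral\<^sup>L (lborel \<Otimes>\<^sub>M lborel) (frac_plap_integrand s p u \<psi>)"
    unfolding split_\<psi> .
qed

lemma frac_plap_integrand_zero_set_neg:
  fixes u \<eta> :: "'a::euclidean_space \<Rightarrow> real" and \<Omega> :: "'a set"
  assumes p: "1 < p" and \<Omega>[measurable]: "\<Omega> \<in> sets borel"
    and u[measurable]: "u \<in> borel_measurable borel" and u_nonneg: "AE x in lborel. 0 \<le> u x"
    and u_nz: "\<not> (AE x in lborel. u x = 0)" and not_pos: "\<not> (AE x in lborel. x \<in> \<Omega> \<longrightarrow> 0 < u x)"
    and \<eta>[measurable]: "\<eta> \<in> borel_measurable borel"
    and \<eta>_nonneg: "\<And>x. 0 \<le> \<eta> x" and \<eta>_pos: "\<And>x. x \<in> \<Omega> \<Longrightarrow> 0 < \<eta> x"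
  defines "\<psi> \<equiv> \<lambda>x. if u x = 0 then \<eta> x else 0"
  assumes int: "integrable (lborel \<Otimes>\<^sub>M lborel) (frac_plap_integrand s p u \<psi>)"
  shows "integral\<^sup>L (lborel \<Otimes>\<^sub>M lborel) (frac_plap_integrand s p u \<psi>) < 0"
proof -
  define Z where "Z = {x \<in> \<Omega>. u x = 0}"
  define Pos where "Pos = {x. 0 < u x}"
  have [measurable]: "Z \<in> sets borel" unfolding Z_def by measurable
  have [measurable]: "Pos \<in> sets borel" unfolding Pos_def by measurable
  have Z: "emeasure lborel Z \<noteq> 0"
  proof
    assume "emeasure lborel Z = 0"
    then have "AE x in lborel. x \<notin> Z" by (intro AE_not_in) auto
    with u_nonneg have "AE x in lborel. x \<in> \<Omega> \<longrightarrow> 0 < u x" by eventually_elim (auto simp: Z_def)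
    with not_pos show False ..
  qed
  have Pos: "emeasure lborel Pos \<noteq> 0"
  proof
    assume "emeasure lborel Pos = 0"
    then have "AE x in lborel. x \<notin> Pos" by (intro AE_not_in) auto
    with u_nonneg have "AE x in lborel. u x = 0" by eventually_elim (auto simp: Pos_def)
    with u_nz show False ..
  qed
  have "emeasure (lborel \<Otimes>\<^sub>M lborel) (Z \<times> Pos) = emeasure lborel Z * emeasure lborel Pos"
    by (rule lborel.emeasure_pair_measure_Times) auto
  with Z Pos have ZP: "Z \<times> Pos \<notin> null_sets (lborel \<Otimes>\<^sub>M lborel)" by auto
  have nonpos: "Jp p (u x - u y) * (\<psi> x - \<psi> y) \<le> 0" if "0 \<le> u x" "0 \<le> u y" for x y
    using that \<eta>_nonneg[of x] \<eta>_nonneg[of y]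
    by (auto simp: \<psi>_def mult_le_0_iff Jp_nonneg_iff Jp_nonpos_iff)
  have "AE z in lborel \<Otimes>\<^sub>M lborel. 0 \<le> u (fst z) \<and> 0 \<le> u (snd z)"
    by (rule AE_pair_lborel_fst_snd[OF _ u_nonneg]) measurable
  then have "AE z in lborel \<Otimes>\<^sub>M lborel. 0 \<le> - frac_plap_integrand s p u \<psi> z"
    by eventually_elim (auto simp: frac_plap_integrand_def intro!: divide_nonpos_nonneg nonpos)
  moreover have "0 < - frac_plap_integrand s p u \<psi> z" if "z \<in> Z \<times> Pos" for z
  proof -
    have x: "fst z \<in> \<Omega>" "u (fst z) = 0" and y: "0 < u (snd z)" using that by (auto simp: Z_def Pos_def)
    then have "fst z \<noteq> snd z" by auto
    moreover have "Jp p (u (fst z) - u (snd z)) * (\<psi> (fst z) - \<psi> (snd z)) < 0"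
      using x y \<eta>_pos[OF x(1)] by (simp add: \<psi>_def mult_neg_pos Jp_neg_iff)
    ultimately show ?thesis by (simp add: frac_plap_integrand_def divide_neg_pos)
  qed
  ultimately have "0 < integral\<^sup>L (lborel \<Otimes>\<^sub>M lborel) (\<lambda>z. - frac_plap_integrand s p u \<psi> z)"
    using int ZP by (intro integral_pos_if_pos_on_nonnull[where S="Z \<times> Pos"]) auto
  then show ?thesis by simp
qed

theorem propositionB3:
  fixes \<Omega> :: "'a::euclidean_space set"
    and s p q \<mu> :: real
    and a u :: "'a \<Rightarrow> real"
  assumes p: "1 < p"
    and s: "0 < s" "s < 1"
    and sp: "s * p < real DIM('a)"
    and \<Omega>: "open \<Omega>" "bounded \<Omega>" "connected \<Omega>"
    and a_meas: "a \<in> borel_measurable lborel"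
    and a_int: "set_integrable lborel \<Omega> (\<lambda>x. \<bar>a x\<bar> powr (real DIM('a) / (s * p)))"
    and q: "p \<le> q" "q \<le> frac_crit_exp DIM('a) s p"
    and u: "u \<in> Dsp0 s p \<Omega>"
    and u_ne: "\<not> (AE x in lborel. u x = 0)"
    and u_nonneg: "AE x in lborel. 0 \<le> u x"
    and super: "\<And>\<phi>. \<phi> \<in> Dsp0 s p \<Omega> \<Longrightarrow> (AE x in lborel. 0 \<le> \<phi> x) \<Longrightarrow>
        (\<integral>z. Jp p (u (fst z) - u (snd z)) * (\<phi> (fst z) - \<phi> (snd z)) /
              norm (fst z - snd z) powr (real DIM('a) + s * p) \<partial>(lborel \<Otimes>\<^sub>M lborel))
        + (LINT x:\<Omega>|lborel. a x * u x powr (p - 1) * \<phi> x)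
        \<ge> \<mu> * (LINT x:\<Omega>|lborel. u x powr (q - 1) * \<phi> x)"
  shows "AE x in lborel. x \<in> \<Omega> \<longrightarrow> 0 < u x"
proof (rule ccontr)
  assume not_pos: "\<not> (AE x in lborel. x \<in> \<Omega> \<longrightarrow> 0 < u x)"
  have u_meas[measurable]: "u \<in> borel_measurable borel" and gu: "gagliardo_pow s p u < \<infinity>"
    and u_int: "integrable lborel (\<lambda>x. \<bar>u x\<bar> powr frac_crit_exp DIM('a) s p)"
    using u by (auto simp: Dsp0_def Dsp0_RN_def)
  have \<Omega>_meas[measurable]: "\<Omega> \<in> sets borel" and \<Omega>_fin: "emeasure lborel \<Omega> < \<infinity>"
    using \<Omega>(1) emeasure_bounded_finite[OF \<Omega>(2)] by auto
  define \<eta> where "\<eta> x = infdist x (- \<Omega>)" for x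
  obtain C where C: "\<And>x. \<eta> x \<le> C" using infdist_compl_bounded[OF \<Omega>(2)] unfolding \<eta>_def by blast
  have \<eta>_D: "\<eta> \<in> Dsp0 s p \<Omega>" and \<eta>_nonneg: "\<And>x. 0 \<le> \<eta> x" and \<eta>_pos: "\<And>x. x \<in> \<Omega> \<Longrightarrow> 0 < \<eta> x"
    unfolding \<eta>_def using s p sp \<Omega>(1,2) by (auto intro: infdist_compl_in_Dsp0 infdist_nonneg infdist_compl_pos)
  have \<eta>_meas[measurable]: "\<eta> \<in> borel_measurable borel" and g\<eta>: "gagliardo_pow s p \<eta> < \<infinity>"
    using \<eta>_D by (auto simp: Dsp0_def Dsp0_RN_def)
  have le: "\<mu> * (LINT x:\<Omega>|lborel. u x powr (q - 1) * max 0 (\<eta> x - real n * u x))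
      \<le> integral\<^sup>L (lborel \<Otimes>\<^sub>M lborel) (frac_plap_integrand s p u (\<lambda>x. max 0 (\<eta> x - real n * u x)))
        + (LINT x:\<Omega>|lborel. a x * u x powr (p - 1) * max 0 (\<eta> x - real n * u x))" for n
    using super[OF Dsp0_pos_part_diff[OF s(1) less_trans[OF zero_less_one p] sp _ \<eta>_D \<eta>_nonneg u u_nonneg]]
    unfolding frac_plap_integrand_def by simp
  have lim_q: "(\<lambda>n. \<mu> * (LINT x:\<Omega>|lborel. u x powr (q - 1) * max 0 (\<eta> x - real n * u x))) \<longlonglongrightarrow> 0"
    using u_meas \<eta>_meas u_int u_nonneg \<eta>_nonneg C p q \<Omega>_fin
    by (intro tendsto_mult_right_zero tendsto_set_integral_mult_pos_part_0 set_integrable_powr_le_crit) auto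
  have lim_a: "(\<lambda>n. LINT x:\<Omega>|lborel. a x * u x powr (p - 1) * max 0 (\<eta> x - real n * u x)) \<longlonglongrightarrow> 0"
    using u_meas \<eta>_meas a_meas a_int u_int u_nonneg \<eta>_nonneg C s p sp \<Omega>_fin
    by (intro tendsto_set_integral_mult_pos_part_0 set_integrable_potential_mult_powr) auto
  note limit = frac_plap_integrand_limit_nonneg[OF p u_meas gu u_nonneg \<eta>_meas g\<eta> \<eta>_nonneg le lim_q lim_a]
  have "integral\<^sup>L (lborel \<Otimes>\<^sub>M lborel) (frac_plap_integrand s p u (\<lambda>x. if u x = 0 then \<eta> x else 0)) < 0"
    using frac_plap_integrand_zero_set_neg[OF p \<Omega>_meas u_meas u_nonneg u_ne not_pos \<eta>_meas \<eta>_nonneg \<eta>_pos limit(1)] .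
  with limit(2) show False by simp
qed

end
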